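(* There exist a finite atom set $\Phi$, a finite agent set $I$, a logic $\Lambda$, an $\boldsymbol{\mathcal{L}}_\Lambda$ modal space $\boldsymbol{X}$ and a clean map $\boldsymbol{f}$ on $\boldsymbol{X}$ induced by a finite, static multi-pointed action model that is not Boolean, such that $\boldsymbol{f}$ exhibits nontrivial recurrence (with respect to the Stone topology): there is $\boldsymbol{x}\in\boldsymbol{X}$ whose orbit $\mathcal{O}_{\boldsymbol{f}}(\boldsymbol{x})$ is not periodic and contains a recurrent point.
   Context: Setting: atom set $\Phi$, finite agent set $I$, modal language $\mathcal{L}$ ($\varphi::=\top\mid p\mid\neg\varphi\mid\varphi\wedge\varphi\mid\square_i\varphi$), logic $\Lambda$ a normal modal logic extending $K$, $\boldsymbol{\mathcal{L}}_\Lambda$ the set of $\Lambda$-equivalence classes of formulas. For a set $X$ of pointed Kripke models (countable nonempty state sets, standard semantics), the modal space is $\boldsymbol{X}=\{\boldsymbol{x}:x\in X\}$, $\boldsymbol{x}=\{y\in X:y,x\text{ satisfy the same formulas}\}$, with the Stone topology generated by the sets $\{\boldsymbol{x}:x\vDash\varphi\}$. Clean map: induced via product update $x\mapsto x\otimes\Sigma\Gamma$ by a multi-pointed action model $\Sigma\Gamma=(\llbracket\Sigma\rrbracket,\mathsf{R},pre,post,\Gamma)$ (countable action set, relations $\mathsf{R}_i$, preconditions in $\mathcal{L}$, postconditions $\top$ or conjunctions of literals over $\Phi$, designated set $\emptyset\ne\Gamma\subseteq\llbracket\Sigma\rrbracket$) that is precondition finite, exhaustive, deterministic and closing over $X$ (every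 $x\in X$ satisfies $pre(\sigma)$ for exactly one $\sigma\in\Gamma$, finitely many preconditions up to equivalence, and $x\otimes\Sigma\Gamma\in X$). Product update: states $(s,\sigma)$ with $Ms\vDash pre(\sigma)$, relations componentwise, $p$ true at $(s,\sigma)$ iff $post(\sigma)\vDash p$, or $s\in\llbracket p\rrbracket$ and $post(\sigma)\nvDash\neg p$; designated state $(s,\sigma)$ for the applicable $\sigma\in\Gamma$. $\boldsymbol{f}(\boldsymbol{x})$ is the class of $x\otimes\Sigma\Gamma$. $\Sigma\Gamma$ is finite if $\llbracket\Sigma\rrbracket$ is finite, Boolean if every precondition is a Boolean (modality-free) formula, static if every postcondition is $\top$. Orbit: $\mathcal{O}_{\boldsymbol{f}}(\boldsymbol{x})=\{\boldsymbol{f}^n(\boldsymbol{x}):n\in\mathbb{N}_0\}$; it is periodic if $\boldsymbol{f}^{n+k}(\boldsymbol{x})=\boldsymbol{f}^n(\boldsymbol{x})$ for some $n\ge0,k>0$. The limit set $\omega_{\boldsymbol{f}}(\boldsymbol{y})$ is the set of limits of convergent subsequences $\boldsymbol{f}^{n_1}(\boldsymbol{y}),\boldsymbol{f}^{n_2}(\boldsymbol{y}),\dots$ ($n_1<n_2<\cdots$); $\boldsymbol{y}$ is recurrent if $\boldsymbol{y}\in\omega_{\boldsymbol{f}}(\boldsymbol{y})$. *)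

theory Defs
  imports "HOL-Analysis.Analysis" "HOL-Library.Nat_Bijection"
begin

(* atoms and agents are natural numbers; the atom set Phi and agent set I are
   finite subsets of nat, and the language L is the set of formulas using only
   atoms from Phi and agents from I *)
datatype fm = Top | Atom nat | Neg fm | Conj fm fm | Box nat fm

definition Imp :: "fm \<Rightarrow> fm \<Rightarrow> fm" where
  "Imp a b = Neg (Conj a (Neg b))"

definition Iff :: "fm \<Rightarrow> fm \<Rightarrow> fm" where
  "Iff a b = Conj (Imp a b) (Imp b a)"

fun in_lang :: "nat set \<Rightarrow> nat set \<Rightarrow> fm \<Rightarrow> bool" where
  "in_lang Phi I Top = True"
| "in_lang Phi I (Atom p) = (p \<in> Phi)"
| "in_lang Phi I (Neg a) = in_lang Phi I a"
| "in_lang Phi I (Conj a b) = (in_lang Phi I a \<and> in_lang Phi I b)"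
| "in_lang Phi I (Box i a) = (i \<in> I \<and> in_lang Phi I a)"

fun boolean :: "fm \<Rightarrow> bool" where
  "boolean Top = True"
| "boolean (Atom p) = True"
| "boolean (Neg a) = boolean a"
| "boolean (Conj a b) = (boolean a \<and> boolean b)"
| "boolean (Box i a) = False"

(* propositional evaluation treating atoms and boxed formulas as propositional letters *)
fun peval :: "(fm \<Rightarrow> bool) \<Rightarrow> fm \<Rightarrow> bool" where
  "peval v Top = True"
| "peval v (Atom p) = v (Atom p)"
| "peval v (Neg a) = (\<not> peval v a)"
| "peval v (Conj a b) = (peval v a \<and> peval v b)"
| "peval v (Box i a) = v (Box i a)"

definition tautology :: "fm \<Rightarrow> bool" where
  "tautology a = (\<forall>v. peval v a)"

fun subst :: "(nat \<Rightarrow> fm) \<Rightarrow> fm \<Rightarrow> fm" where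
  "subst s Top = Top"
| "subst s (Atom p) = s p"
| "subst s (Neg a) = Neg (subst s a)"
| "subst s (Conj a b) = Conj (subst s a) (subst s b)"
| "subst s (Box i a) = Box i (subst s a)"

definition normal_logic :: "nat set \<Rightarrow> nat set \<Rightarrow> fm set \<Rightarrow> bool" where
  "normal_logic Phi I Lam \<longleftrightarrow>
     Lam \<subseteq> {a. in_lang Phi I a}
   \<and> (\<forall>a. in_lang Phi I a \<and> tautology a \<longrightarrow> a \<in> Lam)
   \<and> (\<forall>i\<in>I. \<forall>a b. in_lang Phi I a \<and> in_lang Phi I b \<longrightarrow>
        Imp (Box i (Imp a b)) (Imp (Box i a) (Box i b)) \<in> Lam)
   \<and> (\<forall>a b. a \<in> Lam \<and> Imp a b \<in> Lam \<longrightarrow> b \<in> Lam)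
   \<and> (\<forall>i\<in>I. \<forall>a\<in>Lam. Box i a \<in> Lam)
   \<and> (\<forall>s a. a \<in> Lam \<and> (\<forall>p\<in>Phi. in_lang Phi I (s p)) \<longrightarrow> subst s a \<in> Lam)"

definition lequiv :: "fm set \<Rightarrow> fm \<Rightarrow> fm \<Rightarrow> bool" where
  "lequiv Lam a b = (Iff a b \<in> Lam)"

record kripke =
  W :: "nat set"
  Rel :: "nat \<Rightarrow> nat \<Rightarrow> nat \<Rightarrow> bool"   (* Rel i s t : agent i, from s to t *)
  Val :: "nat \<Rightarrow> nat set"

type_synonym pointed = "kripke \<times> nat"

fun sat :: "kripke \<Rightarrow> nat \<Rightarrow> fm \<Rightarrow> bool" where
  "sat M s Top = True"
| "sat M s (Atom p) = (s \<in> Val M p)"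
| "sat M s (Neg a) = (\<not> sat M s a)"
| "sat M s (Conj a b) = (sat M s a \<and> sat M s b)"
| "sat M s (Box i a) = (\<forall>t. t \<in> W M \<and> Rel M i s t \<longrightarrow> sat M t a)"

definition psat :: "pointed \<Rightarrow> fm \<Rightarrow> bool" where
  "psat x a = sat (fst x) (snd x) a"

record amodel =
  Act :: "nat set"
  ARel :: "nat \<Rightarrow> nat \<Rightarrow> nat \<Rightarrow> bool"
  pre :: "nat \<Rightarrow> fm"
  post :: "nat \<Rightarrow> fm"
  Des :: "nat set"

fun beval :: "(nat \<Rightarrow> bool) \<Rightarrow> fm \<Rightarrow> bool" where
  "beval v Top = True"
| "beval v (Atom p) = v p"
| "beval v (Neg a) = (\<not> beval v a)"
| "beval v (Conj a b) = (beval v a \<and> beval v b)"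
| "beval v (Box i a) = False"

definition bentails :: "fm \<Rightarrow> fm \<Rightarrow> bool" where
  "bentails a b = (\<forall>v. beval v a \<longrightarrow> beval v b)"

fun lit_conj :: "nat set \<Rightarrow> fm \<Rightarrow> bool" where
  "lit_conj Phi (Atom p) = (p \<in> Phi)"
| "lit_conj Phi (Neg (Atom p)) = (p \<in> Phi)"
| "lit_conj Phi (Conj a b) = (lit_conj Phi a \<and> lit_conj Phi b)"
| "lit_conj Phi _ = False"

definition post_ok :: "nat set \<Rightarrow> fm \<Rightarrow> bool" where
  "post_ok Phi a = (a = Top \<or> lit_conj Phi a)"

(* product update; the state (t, sigma) is represented by prod_encode (t, sigma) *)
definition upd_model :: "amodel \<Rightarrow> kripke \<Rightarrow> kripke" where
  "upd_model A M =
     \<lparr> W = {prod_encode (t, \<sigma>) | t \<sigma>. t \<in> W M \<and> \<sigma> \<in> Act A \<and> sat M t (pre A \<sigma>)},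
       Rel = (\<lambda>i u v. Rel M i (fst (prod_decode u)) (fst (prod_decode v))
                      \<and> ARel A i (snd (prod_decode u)) (snd (prod_decode v))),
       Val = (\<lambda>p. {u. bentails (post A (snd (prod_decode u))) (Atom p)
                     \<or> (fst (prod_decode u) \<in> Val M p
                        \<and> \<not> bentails (post A (snd (prod_decode u))) (Neg (Atom p)))}) \<rparr>"

definition upd :: "amodel \<Rightarrow> pointed \<Rightarrow> pointed" where
  "upd A x = (upd_model A (fst x),
              prod_encode (snd x, THE \<sigma>. \<sigma> \<in> Des A \<and> psat x (pre A \<sigma>)))"

definition model_space :: "nat set \<Rightarrow> nat set \<Rightarrow> fm set \<Rightarrow> pointed set \<Rightarrow> bool" where
  "model_space Phi I Lam X \<longleftrightarrow>
     (\<forall>x\<in>X. snd x \<in> W (fst x)) \<and> (\<forall>x\<in>X. \<forall>a\<in>Lam. psat x a)"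

definition meq :: "nat set \<Rightarrow> nat set \<Rightarrow> pointed \<Rightarrow> pointed \<Rightarrow> bool" where
  "meq Phi I x y = (\<forall>a. in_lang Phi I a \<longrightarrow> (psat x a \<longleftrightarrow> psat y a))"

definition cls :: "nat set \<Rightarrow> nat set \<Rightarrow> pointed set \<Rightarrow> pointed \<Rightarrow> pointed set" where
  "cls Phi I X x = {y \<in> X. meq Phi I y x}"

definition mspace :: "nat set \<Rightarrow> nat set \<Rightarrow> pointed set \<Rightarrow> pointed set set" where
  "mspace Phi I X = cls Phi I X ` X"

definition basic :: "nat set \<Rightarrow> nat set \<Rightarrow> pointed set \<Rightarrow> fm \<Rightarrow> pointed set set" where
  "basic Phi I X a = {cls Phi I X x | x. x \<in> X \<and> psat x a}"

definition stone :: "nat set \<Rightarrow> nat set \<Rightarrow> pointed set \<Rightarrow> pointed set topology" where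
  "stone Phi I X = topology (\<lambda>U. U \<subseteq> mspace Phi I X \<and>
      (\<forall>c\<in>U. \<exists>a. in_lang Phi I a \<and> c \<in> basic Phi I X a \<and> basic Phi I X a \<subseteq> U))"

definition clean :: "nat set \<Rightarrow> nat set \<Rightarrow> fm set \<Rightarrow> pointed set \<Rightarrow> amodel \<Rightarrow> bool" where
  "clean Phi I Lam X A \<longleftrightarrow>
     Des A \<noteq> {} \<and> Des A \<subseteq> Act A
   \<and> (\<forall>\<sigma>\<in>Act A. in_lang Phi I (pre A \<sigma>) \<and> post_ok Phi (post A \<sigma>))
   \<and> finite ((\<lambda>\<sigma>. {b. in_lang Phi I b \<and> lequiv Lam (pre A \<sigma>) b}) ` Act A)
   \<and> (\<forall>x\<in>X. \<exists>!\<sigma>. \<sigma> \<in> Des A \<and> psat x (pre A \<sigma>))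
   \<and> (\<forall>x\<in>X. upd A x \<in> X)"

definition finite_am :: "amodel \<Rightarrow> bool" where
  "finite_am A = finite (Act A)"

definition static_am :: "amodel \<Rightarrow> bool" where
  "static_am A = (\<forall>\<sigma>\<in>Act A. post A \<sigma> = Top)"

definition boolean_am :: "amodel \<Rightarrow> bool" where
  "boolean_am A = (\<forall>\<sigma>\<in>Act A. boolean (pre A \<sigma>))"

definition fmap :: "nat set \<Rightarrow> nat set \<Rightarrow> pointed set \<Rightarrow> amodel \<Rightarrow> pointed set \<Rightarrow> pointed set" where
  "fmap Phi I X A c = cls Phi I X (upd A (SOME x. x \<in> c))"

definition periodic_orbit :: "(pointed set \<Rightarrow> pointed set) \<Rightarrow> pointed set \<Rightarrow> bool" where
  "periodic_orbit f c = (\<exists>n k. k > 0 \<and> (f ^^ (n + k)) c = (f ^^ n) c)"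

definition omega_set :: "pointed set topology \<Rightarrow> (pointed set \<Rightarrow> pointed set) \<Rightarrow> pointed set \<Rightarrow> pointed set set" where
  "omega_set T f c = {l. \<exists>r. strict_mono r \<and> limitin T (\<lambda>n. (f ^^ (r n)) c) l sequentially}"

definition recurrent :: "pointed set topology \<Rightarrow> (pointed set \<Rightarrow> pointed set) \<Rightarrow> pointed set \<Rightarrow> bool" where
  "recurrent T f c = (c \<in> omega_set T f c)"

end

theory Submission
  imports Defs "HOL-Computational_Algebra.Primes"
begin

(* With a single agent, let the action model prune have the one precondition <>true, so that product
   update deletes exactly the states without successors. If the root of an atomless model sees, for
   each n in T, heads of chains of height exactly n, then pruning replaces T by its shift
   {n. n + 1 in T}. For infinite T the theory of the root is determined by T: the formula
   <>(<>^n true & []^(n+1) false) holds there iff n in T, and a formula of modal depth d only sees T below d.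
   For T = {n. the 2-adic valuation of n + 1 is even} no two shifts of T coincide, so the orbit is not
   periodic, but shifting T by 2^(N+1) does not change it below N, so the orbit returns to every
   Stone neighbourhood of its starting point. *)

section \<open>Validities form a normal logic\<close>

definition valid_fms :: "nat set \<Rightarrow> nat set \<Rightarrow> fm set" where
  "valid_fms Phi I = {a. in_lang Phi I a \<and> (\<forall>M s. sat M s a)}"

lemma peval_sat: "peval (sat M s) a = sat M s a"
  by (induction a) auto

lemma in_lang_subst:
  "in_lang Phi I a \<Longrightarrow> \<forall>p\<in>Phi. in_lang Phi I (s p) \<Longrightarrow> in_lang Phi I (subst s a)"
  by (induction a) auto

lemma sat_subst: "sat M t (subst s a) = sat (M\<lparr>Val := (\<lambda>p. {u. sat M u (s p)})\<rparr>) t a"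
  by (induction a arbitrary: t) auto

lemma normal_logic_valid_fms: "normal_logic Phi I (valid_fms Phi I)"
  unfolding normal_logic_def valid_fms_def
proof (intro conjI)
  show "\<forall>a. in_lang Phi I a \<and> tautology a \<longrightarrow> a \<in> {a. in_lang Phi I a \<and> (\<forall>M s. sat M s a)}"
    by (auto simp: tautology_def) (metis peval_sat)
  show "\<forall>s a. a \<in> {a. in_lang Phi I a \<and> (\<forall>M s. sat M s a)} \<and> (\<forall>p\<in>Phi. in_lang Phi I (s p)) \<longrightarrow>
        subst s a \<in> {a. in_lang Phi I a \<and> (\<forall>M s. sat M s a)}"
    using in_lang_subst sat_subst by auto
qed (auto simp: Imp_def)

section \<open>Modal spaces and the Stone topology\<close>

lemma cls_cong: "meq Phi I x y \<Longrightarrow> cls Phi I X x = cls Phi I X y"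
  unfolding cls_def meq_def by blast

lemma cls_eq_iff:
  assumes "x \<in> X"
  shows "cls Phi I X x = cls Phi I X y \<longleftrightarrow> meq Phi I x y"
proof
  assume "cls Phi I X x = cls Phi I X y"
  moreover have "x \<in> cls Phi I X x"
    using assms by (simp add: cls_def meq_def)
  ultimately show "meq Phi I x y"
    by (simp add: cls_def)
qed (rule cls_cong)

lemma cls_in_basic_iff:
  assumes "x \<in> X" "in_lang Phi I a"
  shows "cls Phi I X x \<in> basic Phi I X a \<longleftrightarrow> psat x a"
proof -
  have "cls Phi I X x \<in> basic Phi I X a \<longleftrightarrow> (\<exists>y\<in>X. meq Phi I x y \<and> psat y a)"
    unfolding basic_def using cls_eq_iff[OF assms(1)] by blast
  moreover have "meq Phi I x x"
    by (simp add: meq_def)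
  ultimately show ?thesis
    using assms unfolding meq_def by blast
qed

lemma basic_Conj:
  assumes "in_lang Phi I a" "in_lang Phi I b"
  shows "basic Phi I X (Conj a b) = basic Phi I X a \<inter> basic Phi I X b"
proof (intro equalityI subsetI)
  fix c assume "c \<in> basic Phi I X (Conj a b)"
  then obtain x where x: "x \<in> X" "c = cls Phi I X x" "psat x (Conj a b)"
    unfolding basic_def by blast
  then have "psat x a" "psat x b"
    by (simp_all add: psat_def)
  with x show "c \<in> basic Phi I X a \<inter> basic Phi I X b"
    unfolding basic_def by blast
next
  fix c assume c: "c \<in> basic Phi I X a \<inter> basic Phi I X b"
  then obtain x where x: "x \<in> X" "c = cls Phi I X x" "psat x a"
    unfolding basic_def by blast
  with c have "psat x b"
    using cls_in_basic_iff[OF x(1) assms(2)] by simp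
  with x have "psat x (Conj a b)"
    by (simp add: psat_def)
  with x show "c \<in> basic Phi I X (Conj a b)"
    unfolding basic_def by blast
qed

lemma openin_stone:
  "openin (stone Phi I X) U \<longleftrightarrow> U \<subseteq> mspace Phi I X \<and>
     (\<forall>c\<in>U. \<exists>a. in_lang Phi I a \<and> c \<in> basic Phi I X a \<and> basic Phi I X a \<subseteq> U)"
proof -
  define nbhd where "nbhd c U \<longleftrightarrow> (\<exists>a. in_lang Phi I a \<and> c \<in> basic Phi I X a \<and> basic Phi I X a \<subseteq> U)"
    for c U
  have nbhd_Int: "nbhd c (S \<inter> T)" if S: "nbhd c S" and T: "nbhd c T" for c S T
  proof -
    obtain a b where a: "in_lang Phi I a" "c \<in> basic Phi I X a" "basic Phi I X a \<subseteq> S"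
      and b: "in_lang Phi I b" "c \<in> basic Phi I X b" "basic Phi I X b \<subseteq> T"
      using S T unfolding nbhd_def by blast
    have "basic Phi I X (Conj a b) = basic Phi I X a \<inter> basic Phi I X b"
      using a(1) b(1) by (rule basic_Conj)
    moreover have "in_lang Phi I (Conj a b)"
      using a(1) b(1) by simp
    ultimately show ?thesis
      unfolding nbhd_def using a(2,3) b(2,3) by blast
  qed
  have nbhd_mono: "nbhd c V" if "nbhd c U" "U \<subseteq> V" for c U V
    using that unfolding nbhd_def by blast
  have "istopology (\<lambda>U. U \<subseteq> mspace Phi I X \<and> (\<forall>c\<in>U. nbhd c U))"
    unfolding istopology_def
  proof (rule conjI; intro allI impI)
    fix S T
    assume "S \<subseteq> mspace Phi I X \<and> (\<forall>c\<in>S. nbhd c S)" "T \<subseteq> mspace Phi I X \<and> (\<forall>c\<in>T. nbhd c T)"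
    then show "S \<inter> T \<subseteq> mspace Phi I X \<and> (\<forall>c\<in>S \<inter> T. nbhd c (S \<inter> T))"
      using nbhd_Int by blast
  next
    fix K
    assume K: "\<forall>U\<in>K. U \<subseteq> mspace Phi I X \<and> (\<forall>c\<in>U. nbhd c U)"
    have "nbhd c (\<Union>K)" if "c \<in> \<Union>K" for c
      using that K nbhd_mono[OF _ Union_upper] by blast
    with K show "\<Union>K \<subseteq> mspace Phi I X \<and> (\<forall>c\<in>\<Union>K. nbhd c (\<Union>K))"
      by blast
  qed
  then show ?thesis
    unfolding stone_def nbhd_def by simp
qed

lemma basic_Top: "basic Phi I X Top = mspace Phi I X"
  by (auto simp: basic_def mspace_def psat_def)

lemma limitin_stoneI:
  assumes "l \<in> mspace Phi I X"
    and "\<And>a. in_lang Phi I a \<Longrightarrow> l \<in> basic Phi I X a \<Longrightarrow> eventually (\<lambda>n. s n \<in> basic Phi I X a) F"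
  shows "limitin (stone Phi I X) s l F"
  unfolding limitin_def
proof (intro conjI allI impI)
  have "openin (stone Phi I X) (mspace Phi I X)"
    unfolding openin_stone basic_Top[symmetric] using in_lang.simps(1) by blast
  with assms(1) show "l \<in> topspace (stone Phi I X)"
    using openin_subset by blast
  fix U assume "openin (stone Phi I X) U \<and> l \<in> U"
  then obtain a where "in_lang Phi I a" "l \<in> basic Phi I X a" and aU: "basic Phi I X a \<subseteq> U"
    unfolding openin_stone by blast
  then have "eventually (\<lambda>n. s n \<in> basic Phi I X a) F"
    using assms(2) by blast
  then show "eventually (\<lambda>n. s n \<in> U) F"
    by (rule eventually_mono) (use aU in blast)
qed

lemma fmap_cls:
  assumes "x \<in> X"
    and "\<And>y z. y \<in> X \<Longrightarrow> z \<in> X \<Longrightarrow> meq Phi I y z \<Longrightarrow> meq Phi I (upd A y) (upd A z)"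
  shows "fmap Phi I X A (cls Phi I X x) = cls Phi I X (upd A x)"
proof -
  define y where "y = (SOME y. y \<in> cls Phi I X x)"
  have "x \<in> cls Phi I X x"
    using assms(1) by (simp add: cls_def meq_def)
  then have "y \<in> cls Phi I X x"
    unfolding y_def by (rule someI)
  then have "meq Phi I (upd A y) (upd A x)"
    using assms unfolding cls_def by blast
  then show ?thesis
    unfolding fmap_def y_def[symmetric] by (rule cls_cong)
qed

section \<open>Atomless models rooted at chains\<close>

definition atomless :: "kripke \<Rightarrow> bool" where
  "atomless M \<longleftrightarrow> (\<forall>p. Val M p = {})"

fun has_height :: "kripke \<Rightarrow> nat \<Rightarrow> nat \<Rightarrow> bool" where
  "has_height M t 0 \<longleftrightarrow> (\<forall>i u. u \<in> W M \<longrightarrow> \<not> Rel M i t u)"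
| "has_height M t (Suc n) \<longleftrightarrow> (\<forall>i. \<exists>u\<in>W M. Rel M i t u) \<and>
     (\<forall>i u. u \<in> W M \<and> Rel M i t u \<longrightarrow> has_height M u n)"

fun height_sat :: "nat \<Rightarrow> fm \<Rightarrow> bool" where
  "height_sat n Top = True"
| "height_sat n (Atom p) = False"
| "height_sat n (Neg a) = (\<not> height_sat n a)"
| "height_sat n (Conj a b) = (height_sat n a \<and> height_sat n b)"
| "height_sat n (Box i a) = (case n of 0 \<Rightarrow> True | Suc m \<Rightarrow> height_sat m a)"

definition root_of_chains :: "kripke \<Rightarrow> nat \<Rightarrow> nat set \<Rightarrow> bool" where
  "root_of_chains M t T \<longleftrightarrow>
     (\<forall>i u. u \<in> W M \<and> Rel M i t u \<longrightarrow> (\<exists>n\<in>T. has_height M u n))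
   \<and> (\<forall>n\<in>T. \<forall>i. \<exists>u\<in>W M. Rel M i t u \<and> has_height M u n)"

fun root_sat :: "nat set \<Rightarrow> fm \<Rightarrow> bool" where
  "root_sat T Top = True"
| "root_sat T (Atom p) = False"
| "root_sat T (Neg a) = (\<not> root_sat T a)"
| "root_sat T (Conj a b) = (root_sat T a \<and> root_sat T b)"
| "root_sat T (Box i a) = (\<forall>n\<in>T. height_sat n a)"

lemma sat_has_height:
  assumes "atomless M" "has_height M t n"
  shows "sat M t a = height_sat n a"
  using assms(2)
proof (induction a arbitrary: t n)
  case (Box i a)
  show ?case
  proof (cases n)
    case 0
    with Box.prems show ?thesis
      by auto
  next
    case (Suc m)
    with Box.prems have "\<exists>u\<in>W M. Rel M i t u"
      and "\<And>u. u \<in> W M \<Longrightarrow> Rel M i t u \<Longrightarrow> has_height M u m"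
      by auto
    with Box.IH Suc show ?thesis
      by auto
  qed
qed (use assms(1) in \<open>auto simp: atomless_def\<close>)

lemma sat_root_of_chains:
  assumes "atomless M" "root_of_chains M t T"
  shows "sat M t a = root_sat T a"
proof (induction a)
  case (Box i a)
  have "(\<forall>u. u \<in> W M \<and> Rel M i t u \<longrightarrow> sat M u a) \<longleftrightarrow> (\<forall>n\<in>T. height_sat n a)"
  proof
    assume all_succ: "\<forall>u. u \<in> W M \<and> Rel M i t u \<longrightarrow> sat M u a"
    show "\<forall>n\<in>T. height_sat n a"
    proof
      fix n assume "n \<in> T"
      then obtain u where "u \<in> W M" "Rel M i t u" "has_height M u n"
        using assms(2) unfolding root_of_chains_def by blast
      with all_succ show "height_sat n a"
        using sat_has_height[OF assms(1)] by blast
    qed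
  next
    assume all_heights: "\<forall>n\<in>T. height_sat n a"
    show "\<forall>u. u \<in> W M \<and> Rel M i t u \<longrightarrow> sat M u a"
    proof (intro allI impI)
      fix u assume "u \<in> W M \<and> Rel M i t u"
      then obtain n where "n \<in> T" "has_height M u n"
        using assms(2) unfolding root_of_chains_def by blast
      with all_heights show "sat M u a"
        using sat_has_height[OF assms(1)] by blast
    qed
  qed
  then show ?case
    by simp
qed (use assms(1) in \<open>auto simp: atomless_def\<close>)

fun depth :: "fm \<Rightarrow> nat" where
  "depth Top = 0"
| "depth (Atom p) = 0"
| "depth (Neg a) = depth a"
| "depth (Conj a b) = max (depth a) (depth b)"
| "depth (Box i a) = Suc (depth a)"

lemma height_sat_above_depth: "depth a \<le> n \<Longrightarrow> height_sat n a = height_sat (depth a) a"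
proof (induction a arbitrary: n)
  case (Neg a)
  show ?case
    using Neg.IH[OF Neg.prems[unfolded depth.simps]] by simp
next
  case (Conj a b)
  have "depth a \<le> n" "depth b \<le> n" "depth a \<le> depth (Conj a b)" "depth b \<le> depth (Conj a b)"
    using Conj.prems by auto
  then show ?case
    using Conj.IH(1)[of n] Conj.IH(2)[of n] Conj.IH(1)[of "depth (Conj a b)"]
      Conj.IH(2)[of "depth (Conj a b)"]
    by (simp only: height_sat.simps)
next
  case (Box i a)
  obtain n' where n': "n = Suc n'" "depth a \<le> n'"
    using Box.prems by (cases n) auto
  then show ?case
    using Box.IH[OF n'(2)] by simp
qed auto

lemma all_height_sat_iff:
  assumes "infinite T"
  shows "(\<forall>n\<in>T. height_sat n a) \<longleftrightarrow>
    (\<forall>n\<in>T. n < depth a \<longrightarrow> height_sat n a) \<and> height_sat (depth a) a"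
proof -
  obtain m where m: "m \<in> T" "depth a \<le> m"
    using assms unfolding infinite_nat_iff_unbounded_le by blast
  show ?thesis
  proof
    assume "\<forall>n\<in>T. height_sat n a"
    with m show "(\<forall>n\<in>T. n < depth a \<longrightarrow> height_sat n a) \<and> height_sat (depth a) a"
      using height_sat_above_depth by blast
  next
    assume "(\<forall>n\<in>T. n < depth a \<longrightarrow> height_sat n a) \<and> height_sat (depth a) a"
    then show "\<forall>n\<in>T. height_sat n a"
      using height_sat_above_depth leI by blast
  qed
qed

lemma root_sat_cong:
  assumes "infinite T" "infinite T'" "\<forall>n<depth a. n \<in> T \<longleftrightarrow> n \<in> T'"
  shows "root_sat T a = root_sat T' a"
  using assms(3)
proof (induction a)
  case (Box i a)
  then show ?case
    using all_height_sat_iff[OF assms(1)] all_height_sat_iff[OF assms(2)] by auto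
qed auto

fun dia_pow :: "nat \<Rightarrow> fm" where
  "dia_pow 0 = Top"
| "dia_pow (Suc n) = Neg (Box 0 (Neg (dia_pow n)))"

fun box_bot :: "nat \<Rightarrow> fm" where
  "box_bot 0 = Neg Top"
| "box_bot (Suc n) = Box 0 (box_bot n)"

definition has_chain :: "nat \<Rightarrow> fm" where
  "has_chain n = Neg (Box 0 (Neg (Conj (dia_pow n) (box_bot (Suc n)))))"

lemma height_sat_dia_pow: "height_sat m (dia_pow n) \<longleftrightarrow> n \<le> m"
  by (induction n arbitrary: m) (auto split: nat.splits)

lemma height_sat_box_bot: "height_sat m (box_bot n) \<longleftrightarrow> m < n"
  by (induction n arbitrary: m) (auto split: nat.splits)

lemma root_sat_has_chain: "root_sat T (has_chain n) \<longleftrightarrow> n \<in> T"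
proof -
  have "height_sat m (Conj (dia_pow n) (box_bot (Suc n))) \<longleftrightarrow> m = n" for m
    using height_sat_dia_pow[of m n] height_sat_box_bot[of m "Suc n"]
    by (simp only: height_sat.simps(4)) arith
  then show ?thesis
    unfolding has_chain_def by (simp only: root_sat.simps(3,5) height_sat.simps(3)) blast
qed

lemma in_lang_has_chain: "in_lang Phi {0} (has_chain n)"
proof -
  have "in_lang Phi {0} (dia_pow k)" "in_lang Phi {0} (box_bot k)" for k
    by (induction k) auto
  then show ?thesis
    by (simp add: has_chain_def)
qed

section \<open>Pruning dead ends\<close>

definition shift :: "nat set \<Rightarrow> nat \<Rightarrow> nat set" where
  "shift T m = {n. n + m \<in> T}"

lemma shift_0 [simp]: "shift T 0 = T"
  by (simp add: shift_def)

lemma shift_shift [simp]: "shift (shift T m) k = shift T (k + m)"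
  by (simp add: shift_def add.assoc)

lemma infinite_shift:
  assumes "infinite T"
  shows "infinite (shift T m)"
  unfolding infinite_nat_iff_unbounded_le
proof
  fix B
  obtain n where "B + m \<le> n" "n \<in> T"
    using assms unfolding infinite_nat_iff_unbounded_le by blast
  then show "\<exists>j\<ge>B. j \<in> shift T m"
    by (intro exI[of _ "n - m"]) (simp add: shift_def)
qed

definition prune :: amodel where
  "prune = \<lparr>Act = {0}, ARel = (\<lambda>i \<sigma> \<tau>. True), pre = (\<lambda>\<sigma>. dia_pow (Suc 0)), post = (\<lambda>\<sigma>. Top),
     Des = {0}\<rparr>"

lemma W_upd_prune:
  "prod_encode (t, 0) \<in> W (upd_model prune M) \<longleftrightarrow> t \<in> W M \<and> (\<exists>w\<in>W M. Rel M 0 t w)"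
  by (auto simp: upd_model_def prune_def)

lemma succ_upd_prune_iff:
  "v \<in> W (upd_model prune M) \<and> Rel (upd_model prune M) i (prod_encode (t, 0)) v \<longleftrightarrow>
     (\<exists>u. v = prod_encode (u, 0) \<and> u \<in> W M \<and> Rel M i t u \<and> (\<exists>w\<in>W M. Rel M 0 u w))"
  by (auto simp: upd_model_def prune_def)

lemma atomless_upd_prune: "atomless M \<Longrightarrow> atomless (upd_model prune M)"
  by (auto simp: atomless_def upd_model_def prune_def bentails_def)

lemma has_height_upd_prune:
  "has_height M t (Suc n) \<Longrightarrow> has_height (upd_model prune M) (prod_encode (t, 0)) n"
proof (induction n arbitrary: t)
  case 0
  then have "\<not> (v \<in> W (upd_model prune M) \<and> Rel (upd_model prune M) i (prod_encode (t, 0)) v)"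
    for i v
    unfolding succ_upd_prune_iff by auto
  then show ?case
    by simp
next
  case (Suc n)
  have succ_height: "has_height M u (Suc n)" if "u \<in> W M" "Rel M i t u" for i u
    using Suc.prems that has_height.simps(2)[of M t "Suc n"] by blast
  have "\<exists>v\<in>W (upd_model prune M). Rel (upd_model prune M) i (prod_encode (t, 0)) v" for i
  proof -
    obtain u where u: "u \<in> W M" "Rel M i t u"
      using Suc.prems has_height.simps(2)[of M t "Suc n"] by blast
    then have "\<exists>w\<in>W M. Rel M 0 u w"
      using succ_height by simp
    with u show ?thesis
      using succ_upd_prune_iff by blast
  qed
  moreover have "has_height (upd_model prune M) v n"
    if "v \<in> W (upd_model prune M)" "Rel (upd_model prune M) i (prod_encode (t, 0)) v" for i v
  proof -
    from that obtain u where "v = prod_encode (u, 0)" "u \<in> W M" "Rel M i t u"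
      using succ_upd_prune_iff by blast
    then show ?thesis
      using Suc.IH succ_height by blast
  qed
  ultimately show ?case
    by (simp only: has_height.simps) blast
qed

lemma root_of_chains_upd_prune:
  assumes "root_of_chains M t T"
  shows "root_of_chains (upd_model prune M) (prod_encode (t, 0)) (shift T 1)"
  unfolding root_of_chains_def
proof (intro conjI allI impI ballI)
  fix i v
  assume "v \<in> W (upd_model prune M) \<and> Rel (upd_model prune M) i (prod_encode (t, 0)) v"
  then obtain u where u: "v = prod_encode (u, 0)" "u \<in> W M" "Rel M i t u" "\<exists>w\<in>W M. Rel M 0 u w"
    unfolding succ_upd_prune_iff by blast
  then obtain m where m: "m \<in> T" "has_height M u m"
    using assms unfolding root_of_chains_def by blast
  with u(4) obtain k where "m = Suc k"
    by (cases m) auto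
  with m u(1) show "\<exists>n\<in>shift T 1. has_height (upd_model prune M) v n"
    using has_height_upd_prune by (auto simp: shift_def)
next
  fix n i
  assume "n \<in> shift T 1"
  then have "Suc n \<in> T"
    by (simp add: shift_def)
  then obtain u where u: "u \<in> W M" "Rel M i t u" "has_height M u (Suc n)"
    using assms unfolding root_of_chains_def by blast
  then have "\<exists>w\<in>W M. Rel M 0 u w"
    by simp
  with u show "\<exists>v\<in>W (upd_model prune M). Rel (upd_model prune M) i (prod_encode (t, 0)) v \<and>
      has_height (upd_model prune M) v n"
    using succ_upd_prune_iff has_height_upd_prune by blast
qed

definition chain_root :: "pointed \<Rightarrow> nat set \<Rightarrow> bool" where
  "chain_root x T \<longleftrightarrow> snd x \<in> W (fst x) \<and> atomless (fst x) \<and> root_of_chains (fst x) (snd x) T"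

lemma psat_chain_root: "chain_root x T \<Longrightarrow> psat x a = root_sat T a"
  unfolding chain_root_def psat_def using sat_root_of_chains by blast

lemma chain_root_upd_prune:
  assumes "chain_root x T" "T \<noteq> {}"
  shows "chain_root (upd prune x) (shift T 1)"
proof -
  have "psat x (dia_pow (Suc 0))"
    using psat_chain_root[OF assms(1)] assms(2) by simp
  then have "upd prune x = (upd_model prune (fst x), prod_encode (snd x, 0))"
    and "\<exists>w\<in>W (fst x). Rel (fst x) 0 (snd x) w"
    by (auto simp: upd_def prune_def psat_def)
  with assms(1) show ?thesis
    unfolding chain_root_def
    using W_upd_prune atomless_upd_prune root_of_chains_upd_prune by simp
qed

section \<open>The even part of the 2-adic valuation\<close>

lemma multiplicity_add_prime_power:
  fixes p m :: nat
  assumes "prime p" "0 < m" "m < p ^ k"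
  shows "multiplicity p (m + p ^ k) = multiplicity p m"
proof (rule multiplicity_sum_lt)
  have "p ^ multiplicity p m \<le> m"
    using assms(2) by (intro dvd_imp_le multiplicity_dvd)
  with assms(3) have "p ^ multiplicity p m < p ^ k"
    by linarith
  with assms(1) show "multiplicity p m < multiplicity p (p ^ k)"
    using prime_gt_1_nat by auto
qed (use assms in auto)

definition even_val :: "nat set" where
  "even_val = {n. even (multiplicity (2::nat) (Suc n))}"

lemma infinite_even_val: "infinite even_val"
  unfolding infinite_nat_iff_unbounded_le
proof
  fix m
  have "2 * m \<in> even_val"
    by (simp add: even_val_def not_dvd_imp_multiplicity_0)
  then show "\<exists>n\<ge>m. n \<in> even_val"
    by (intro exI[of _ "2 * m"]) auto
qed

lemma shift_even_val_ne:
  assumes "0 < k"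
  shows "shift even_val (n + k) \<noteq> shift even_val n"
proof
  assume eq: "shift even_val (n + k) = shift even_val n"
  define m where "m = k * (4 * n + 1) - 1"
  have "4 * n + 1 \<le> k * (4 * n + 1)"
    using assms mult_le_mono1[of 1 k "4 * n + 1"] by simp
  then have m: "Suc m = k * (4 * n + 1)" "n \<le> m"
    unfolding m_def by linarith+
  then have mk: "Suc (m + k) = 2 * (k * (2 * n + 1))"
    by simp
  have mult: "multiplicity (2::nat) (a * b) = multiplicity 2 a + multiplicity 2 b"
    if "a \<noteq> 0" "b \<noteq> 0" for a b
    using that by (intro prime_elem_multiplicity_mult_distrib) auto
  have odd: "multiplicity (2::nat) (4 * n + 1) = 0" "multiplicity (2::nat) (2 * n + 1) = 0"
    by (simp_all add: not_dvd_imp_multiplicity_0)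
  have "multiplicity 2 (Suc m) = multiplicity 2 k"
    unfolding m(1) using assms odd(1) mult[of k "4 * n + 1"] by simp
  moreover have "multiplicity 2 (Suc (m + k)) = Suc (multiplicity 2 k)"
    unfolding mk using assms odd(2) mult[of 2 "k * (2 * n + 1)"] mult[of k "2 * n + 1"] by simp
  moreover have "m - n \<in> shift even_val (n + k) \<longleftrightarrow> m - n \<in> shift even_val n"
    using eq by simp
  then have "m + k \<in> even_val \<longleftrightarrow> m \<in> even_val"
    using m(2) by (simp add: shift_def)
  ultimately show False
    by (simp add: even_val_def)
qed

lemma shift_even_val_power_two:
  assumes "j \<le> n"
  shows "j \<in> shift even_val (2 ^ Suc n) \<longleftrightarrow> j \<in> even_val"
proof -
  have "Suc j \<le> 2 ^ n"
    using assms less_exp[of n] by linarith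
  then have "multiplicity 2 (Suc j + 2 ^ Suc n) = multiplicity (2::nat) (Suc j)"
    by (intro multiplicity_add_prime_power) auto
  then show ?thesis
    by (simp add: shift_def even_val_def)
qed

section \<open>The orbit of a root of chains\<close>

(* State 0 is the root; state n + 1 heads the chain n + 1 -> n -> ... -> 1 of height n. *)

definition chains_model :: "nat set \<Rightarrow> kripke" where
  "chains_model T = \<lparr>W = UNIV, Rel = (\<lambda>i u v. (u = 0 \<and> 0 < v \<and> v - 1 \<in> T) \<or> (2 \<le> u \<and> v = u - 1)),
     Val = (\<lambda>p. {})\<rparr>"

lemma has_height_chains_model: "has_height (chains_model T) (Suc k) k"
proof (induction k)
  case 0
  then show ?case
    by (simp add: chains_model_def)
next
  case (Suc k)
  have "\<forall>i. \<exists>u\<in>W (chains_model T). Rel (chains_model T) i (Suc (Suc k)) u"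
    by (auto simp: chains_model_def)
  moreover have "\<forall>i u. u \<in> W (chains_model T) \<and> Rel (chains_model T) i (Suc (Suc k)) u \<longrightarrow>
      has_height (chains_model T) u k"
    using Suc by (auto simp: chains_model_def)
  ultimately show ?case
    by (simp only: has_height.simps) blast
qed

lemma chain_root_chains_model: "chain_root (chains_model T, 0) T"
proof -
  have "root_of_chains (chains_model T) 0 T"
    unfolding root_of_chains_def
  proof (intro conjI allI impI ballI)
    fix i u assume "u \<in> W (chains_model T) \<and> Rel (chains_model T) i 0 u"
    then have "u = Suc (u - 1)" "u - 1 \<in> T"
      by (auto simp: chains_model_def)
    then show "\<exists>n\<in>T. has_height (chains_model T) u n"
      using has_height_chains_model by metis
  next
    fix n i assume "n \<in> T"
    then show "\<exists>u\<in>W (chains_model T). Rel (chains_model T) i 0 u \<and> has_height (chains_model T) u n"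
      using has_height_chains_model by (intro bexI[of _ "Suc n"]) (auto simp: chains_model_def)
  qed
  then show ?thesis
    by (simp add: chain_root_def atomless_def chains_model_def)
qed

definition orbit_point :: "nat set \<Rightarrow> nat \<Rightarrow> pointed" where
  "orbit_point T m = (upd prune ^^ m) (chains_model T, 0)"

lemma upd_prune_orbit_point: "upd prune (orbit_point T m) = orbit_point T (Suc m)"
  by (simp add: orbit_point_def)

context
  fixes T :: "nat set"
  assumes infinite_T: "infinite T"
begin

lemma shift_T_nonempty: "shift T m \<noteq> {}"
  using infinite_shift[OF infinite_T] by (metis finite.emptyI)

lemma chain_root_orbit_point: "chain_root (orbit_point T m) (shift T m)"
proof (induction m)
  case 0
  then show ?case
    using chain_root_chains_model by (simp add: orbit_point_def)
next
  case (Suc m)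
  then show ?case
    using chain_root_upd_prune[OF _ shift_T_nonempty] upd_prune_orbit_point by fastforce
qed

lemma psat_orbit_point: "psat (orbit_point T m) a = root_sat (shift T m) a"
  using chain_root_orbit_point by (rule psat_chain_root)

lemma meq_orbit_point_iff:
  "meq {0} {0} (orbit_point T k) (orbit_point T m) \<longleftrightarrow> shift T k = shift T m"
proof
  assume "meq {0} {0} (orbit_point T k) (orbit_point T m)"
  then have "root_sat (shift T k) (has_chain n) = root_sat (shift T m) (has_chain n)" for n
    using in_lang_has_chain[of "{0}" n] unfolding meq_def psat_orbit_point by blast
  then show "shift T k = shift T m"
    unfolding root_sat_has_chain by blast
qed (simp add: meq_def psat_orbit_point)

lemma cls_orbit_point_eq_iff:
  "cls {0} {0} (range (orbit_point T)) (orbit_point T k) = cls {0} {0} (range (orbit_point T)) (orbit_point T m)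
    \<longleftrightarrow> shift T k = shift T m"
  by (simp add: cls_eq_iff meq_orbit_point_iff)

lemma funpow_fmap_orbit_point:
  "(fmap {0} {0} (range (orbit_point T)) prune ^^ n) (cls {0} {0} (range (orbit_point T)) (orbit_point T 0))
    = cls {0} {0} (range (orbit_point T)) (orbit_point T n)"
proof (induction n)
  case (Suc n)
  have "meq {0} {0} (upd prune y) (upd prune z)"
    if yz: "y \<in> range (orbit_point T)" "z \<in> range (orbit_point T)" and "meq {0} {0} y z" for y z
  proof -
    obtain j k where jk: "y = orbit_point T j" "z = orbit_point T k"
      using yz by blast
    with \<open>meq {0} {0} y z\<close> have "shift (shift T j) 1 = shift (shift T k) 1"
      by (simp only: meq_orbit_point_iff)
    then have "shift T (Suc j) = shift T (Suc k)"
      by simp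
    with jk show ?thesis
      by (simp only: meq_orbit_point_iff upd_prune_orbit_point)
  qed
  then have "fmap {0} {0} (range (orbit_point T)) prune (cls {0} {0} (range (orbit_point T)) (orbit_point T n))
      = cls {0} {0} (range (orbit_point T)) (orbit_point T (Suc n))"
    unfolding upd_prune_orbit_point[symmetric] by (intro fmap_cls) auto
  with Suc.IH show ?case
    by simp
qed (simp add: orbit_point_def)

lemma not_periodic_orbit_point:
  assumes "\<And>n k. 0 < k \<Longrightarrow> shift T (n + k) \<noteq> shift T n"
  shows "\<not> periodic_orbit (fmap {0} {0} (range (orbit_point T)) prune)
    (cls {0} {0} (range (orbit_point T)) (orbit_point T 0))"
proof
  assume "periodic_orbit (fmap {0} {0} (range (orbit_point T)) prune)
    (cls {0} {0} (range (orbit_point T)) (orbit_point T 0))"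
  then obtain n k where "0 < k" "shift T (n + k) = shift T n"
    unfolding periodic_orbit_def funpow_fmap_orbit_point cls_orbit_point_eq_iff by blast
  with assms show False
    by blast
qed

lemma recurrent_orbit_point:
  assumes "strict_mono r" and agree: "\<And>n j. j \<le> n \<Longrightarrow> j \<in> shift T (r n) \<longleftrightarrow> j \<in> T"
  shows "recurrent (stone {0} {0} (range (orbit_point T))) (fmap {0} {0} (range (orbit_point T)) prune)
    (cls {0} {0} (range (orbit_point T)) (orbit_point T 0))"
proof -
  let ?X = "range (orbit_point T)"
  let ?c = "cls {0} {0} ?X (orbit_point T 0)"
  have "limitin (stone {0} {0} ?X) (\<lambda>n. (fmap {0} {0} ?X prune ^^ r n) ?c) ?c sequentially"
  proof (rule limitin_stoneI)
    show "?c \<in> mspace {0} {0} ?X"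
      by (simp add: mspace_def)
    fix a assume a: "in_lang {0} {0} a" "?c \<in> basic {0} {0} ?X a"
    then have "root_sat T a"
      using cls_in_basic_iff psat_orbit_point by (metis rangeI shift_0)
    then have "root_sat (shift T (r n)) a" if "depth a \<le> n" for n
      using root_sat_cong[OF infinite_shift[OF infinite_T] infinite_T] agree that by simp
    then have "psat (orbit_point T (r n)) a" if "depth a \<le> n" for n
      using that by (simp add: psat_orbit_point)
    then show "eventually (\<lambda>n. (fmap {0} {0} ?X prune ^^ r n) ?c \<in> basic {0} {0} ?X a) sequentially"
      using a(1) by (auto simp: funpow_fmap_orbit_point cls_in_basic_iff intro: eventually_sequentiallyI)
  qed
  with assms(1) show ?thesis
    unfolding recurrent_def omega_set_def by blast
qed

lemma model_space_orbit_points: "model_space Phi I (valid_fms Phi I) (range (orbit_point T))"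
  unfolding model_space_def
proof (intro conjI ballI)
  fix x assume "x \<in> range (orbit_point T)"
  then show "snd x \<in> W (fst x)"
    using chain_root_orbit_point by (auto simp: chain_root_def)
  fix a assume "a \<in> valid_fms Phi I"
  then show "psat x a"
    by (simp add: valid_fms_def psat_def)
qed

lemma clean_prune: "clean {0} {0} (valid_fms {0} {0}) (range (orbit_point T)) prune"
  unfolding clean_def
proof (intro conjI ballI)
  show "Des prune \<noteq> {}" "Des prune \<subseteq> Act prune"
    "finite ((\<lambda>\<sigma>. {b. in_lang {0} {0} b \<and> lequiv (valid_fms {0} {0}) (pre prune \<sigma>) b}) ` Act prune)"
    by (simp_all add: prune_def)
  fix \<sigma> assume "\<sigma> \<in> Act prune"
  then show "in_lang {0} {0} (pre prune \<sigma>)" "post_ok {0} (post prune \<sigma>)"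
    by (simp_all add: prune_def post_ok_def)
next
  fix x assume "x \<in> range (orbit_point T)"
  then obtain m where x: "x = orbit_point T m"
    by blast
  with shift_T_nonempty show "\<exists>!\<sigma>. \<sigma> \<in> Des prune \<and> psat x (pre prune \<sigma>)"
    by (simp add: prune_def psat_orbit_point)
  from x show "upd prune x \<in> range (orbit_point T)"
    by (simp add: upd_prune_orbit_point)
qed

end

theorem proposition10:
  shows "\<exists>(Phi :: nat set) (I :: nat set) (Lam :: fm set) (X :: pointed set) (A :: amodel) (x :: pointed).
     finite Phi \<and> Phi \<noteq> {} \<and> finite I \<and> I \<noteq> {}
   \<and> normal_logic Phi I Lam
   \<and> model_space Phi I Lam X
   \<and> clean Phi I Lam X A \<and> finite_am A \<and> static_am A \<and> \<not> boolean_am A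
   \<and> x \<in> X
   \<and> \<not> periodic_orbit (fmap Phi I X A) (cls Phi I X x)
   \<and> (\<exists>n. recurrent (stone Phi I X) (fmap Phi I X A) ((fmap Phi I X A ^^ n) (cls Phi I X x)))"
proof -
  let ?X = "range (orbit_point even_val)"
  have "\<not> periodic_orbit (fmap {0} {0} ?X prune) (cls {0} {0} ?X (orbit_point even_val 0))"
    using not_periodic_orbit_point[OF infinite_even_val] shift_even_val_ne by blast
  moreover have "recurrent (stone {0} {0} ?X) (fmap {0} {0} ?X prune)
      ((fmap {0} {0} ?X prune ^^ 0) (cls {0} {0} ?X (orbit_point even_val 0)))"
    using recurrent_orbit_point[OF infinite_even_val, of "\<lambda>n. 2 ^ Suc n"]
      shift_even_val_power_two by (simp add: strict_mono_def)
  moreover have "finite_am prune" "static_am prune" "\<not> boolean_am prune"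
    by (simp_all add: finite_am_def static_am_def boolean_am_def prune_def)
  ultimately show ?thesis
    using normal_logic_valid_fms model_space_orbit_points[OF infinite_even_val]
      clean_prune[OF infinite_even_val]
    by (intro exI[of _ "{0}"] exI[of _ "valid_fms {0} {0}"] exI[of _ ?X] exI[of _ prune]
        exI[of _ "orbit_point even_val 0"] exI[of _ "0::nat"] conjI rangeI) simp_all
qed

end
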